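(* Let $A$ be a real $m\times m$ matrix, $f$ in the range of $A$, $y$ the minimal-norm solution of $Ay=f$ (so $y\perp\mathcal{N}(A)$), and $q\in(0,1)$. Define $u_1=0$ and $u_{n+1}=q^nT_{q^n}^{-1}u_n+T_{q^n}^{-1}A^*f$ for $n\ge1$. Then $\lim_{n\to\infty}\|u_n-y\|=0$.
   Context: $A^*$ is the transpose of $A$, $T:=A^*A$, $T_a:=T+aI$ for $a>0$; $\mathcal{N}(A)=\{u:Au=0\}$; $\|\cdot\|$ is the Euclidean norm. *)

theory Defs
  imports "HOL-Analysis.Analysis"
begin

definition T_reg :: "real^'m^'m \<Rightarrow> real \<Rightarrow> real^'m^'m" where
  "T_reg A a = transpose A ** A + a *\<^sub>R mat 1"

definition is_min_norm_solution :: "real^'m^'m \<Rightarrow> real^'m \<Rightarrow> real^'m \<Rightarrow> bool" where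
  "is_min_norm_solution A f y \<longleftrightarrow> A *v y = f \<and> (\<forall>z. A *v z = f \<longrightarrow> norm y \<le> norm z)"

end

theory Submission
  imports Defs
begin

(* Write e n = u n - y for the error.  Since A^T A y = A^T f, the scheme says
   exactly that T_{q^n} e(n+1) = q^n e n.  Let V = N(A)^perp.  Two facts drive
   the proof:
   (1) the minimal-norm solution y lies in V, so e 1 = -y lies in V;
   (2) if e is in V and A^T A e' + a e' = a e with a > 0, then e' is in V and
       (a + c^2) |e'| <= a |e|, where c > 0 is a lower bound for |A x|/|x| on V
       (which exists because A is injective on the closed subspace V).
   By (2) the errors stay in V and never grow, so |e n| <= |y|, and moreover
   c^2 |e(n+1)| <= q^n |e n| <= q^n |y|, which tends to 0.
   The file first collects the facts about T_a, then (1), (2) and the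
   coercivity constant, then the abstract error estimate, and finally the
   theorem. *)

definition ker_perp :: "real^'n^'m \<Rightarrow> (real^'n) set" where
  "ker_perp A = {x. \<forall>z. A *v z = 0 \<longrightarrow> x \<bullet> z = 0}"

lemma subspace_ker_perp: "subspace (ker_perp A)"
  unfolding ker_perp_def subspace_def by (auto simp: inner_add_left)

lemma inner_normal_operator:
  fixes A :: "real^'n^'m"
  shows "(transpose A *v (A *v x)) \<bullet> z = (A *v x) \<bullet> (A *v z)"
  by (simp add: dot_lmul_matrix)

lemma T_reg_mult: "T_reg A a *v x = transpose A *v (A *v x) + a *\<^sub>R x"
  unfolding T_reg_def
  by (simp add: matrix_vector_mult_add_rdistrib matrix_vector_mul_assoc
        flip: scaleR_matrix_vector_assoc)

lemma inner_T_reg: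
  fixes A :: "real^'n^'m"
  shows "(transpose A *v (A *v x) + a *\<^sub>R x) \<bullet> z = (A *v x) \<bullet> (A *v z) + a * (x \<bullet> z)"
  by (simp add: inner_add_left inner_normal_operator del: transpose_matrix_vector)

text \<open>For \<open>a > 0\<close> the matrix \<open>T\<^sub>a\<close> is positive definite, hence invertible, and
  \<open>matrix_inv\<close> is a genuine right inverse of it.\<close>
lemma T_reg_matrix_inv:
  fixes A :: "real^'m^'m"
  assumes "a > 0"
  shows "T_reg A a *v (matrix_inv (T_reg A a) *v w) = w"
proof -
  have "x = 0" if "T_reg A a *v x = 0" for x
  proof -
    have "(A *v x) \<bullet> (A *v x) + a * (x \<bullet> x) = 0"
      using that inner_T_reg[of A x a x] by (simp add: T_reg_mult)
    then have "a * (x \<bullet> x) = 0"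
      using assms by (smt (verit) inner_ge_zero mult_nonneg_nonneg)
    then show "x = 0" using assms by simp
  qed
  then have "invertible (T_reg A a)"
    using invertible_left_inverse matrix_left_invertible_ker by blast
  then have "T_reg A a ** matrix_inv (T_reg A a) = mat 1"
    unfolding invertible_def matrix_inv_def by (rule someI2_ex) auto
  then show ?thesis by (metis matrix_vector_mul_assoc matrix_vector_mul_lid)
qed

text \<open>Fact (1): the minimal-norm solution is orthogonal to the null space.  Otherwise
  moving along a null vector \<open>z\<close> by \<open>t = -\<langle>y,z\<rangle>/|z|\<^sup>2\<close> would decrease the norm.\<close>
lemma min_norm_solution_ker_perp:
  fixes A :: "real^'m^'m"
  assumes y: "is_min_norm_solution A f y"
  shows "y \<in> ker_perp A"
  unfolding ker_perp_def
proof (intro CollectI allI impI)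
  fix z assume z: "A *v z = 0"
  show "y \<bullet> z = 0"
  proof (cases "z = 0")
    case False
    define t where "t = - (y \<bullet> z) / (z \<bullet> z)"
    have zz: "z \<bullet> z > 0" using False by simp
    have "A *v (y + t *\<^sub>R z) = f"
      using y z by (simp add: is_min_norm_solution_def matrix_vector_right_distrib
                             matrix_vector_mult_scaleR)
    then have "norm y \<le> norm (y + t *\<^sub>R z)"
      using y unfolding is_min_norm_solution_def by blast
    then have "y \<bullet> y \<le> (y + t *\<^sub>R z) \<bullet> (y + t *\<^sub>R z)"
      by (simp add: norm_eq_sqrt_inner)
    also have "\<dots> = y \<bullet> y + 2 * t * (y \<bullet> z) + t\<^sup>2 * (z \<bullet> z)"
      by (simp add: inner_commute power2_eq_square algebra_simps)
    also have "\<dots> = y \<bullet> y - (y \<bullet> z)\<^sup>2 / (z \<bullet> z)"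
      using zz by (simp add: t_def power2_eq_square field_simps)
    finally have "(y \<bullet> z)\<^sup>2 / (z \<bullet> z) \<le> 0" by simp
    then show ?thesis using zz by (simp add: divide_le_0_iff)
  qed simp
qed

text \<open>Coercivity: \<open>A\<close> is injective on \<open>N(A)\<^sup>\<bottom>\<close>, hence bounded below there.\<close>
lemma ker_perp_coercive:
  fixes A :: "real^'n^'m"
  shows "\<exists>c>0. \<forall>x\<in>ker_perp A. c * norm x \<le> norm (A *v x)"
proof -
  have "\<exists>c>0. \<forall>x\<in>ker_perp A. norm (A *v x) \<ge> c * norm x"
  proof (rule injective_imp_isometric)
    show "closed (ker_perp A)" "subspace (ker_perp A)"
      using subspace_ker_perp closed_subspace by blast+
    show "bounded_linear ((*v) A)" by simp
    show "\<forall>x\<in>ker_perp A. A *v x = 0 \<longrightarrow> x = 0" unfolding ker_perp_def by auto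
  qed
  then show ?thesis by simp
qed

lemma tikhonov_step_ker_perp:
  fixes A :: "real^'n^'m"
  assumes a: "a > 0"
    and eq: "transpose A *v (A *v e') + a *\<^sub>R e' = a *\<^sub>R e"
    and e: "e \<in> ker_perp A"
  shows "e' \<in> ker_perp A"
  unfolding ker_perp_def
proof (intro CollectI allI impI)
  fix z assume z: "A *v z = 0"
  have "a * (e \<bullet> z) = a * (e' \<bullet> z)"
    using inner_T_reg[of A e' a z] z unfolding eq by simp
  moreover have "e \<bullet> z = 0" using e z unfolding ker_perp_def by simp
  ultimately show "e' \<bullet> z = 0" using a by simp
qed

text \<open>It follows from
  \<open>|Ae'|\<^sup>2 + a|e'|\<^sup>2 = a\<langle>e,e'\<rangle> \<le> a|e||e'|\<close>.\<close>
lemma tikhonov_step_contraction: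
  fixes A :: "real^'n^'m"
  assumes a: "a > 0" and c: "c \<ge> 0"
    and coercive: "c * norm e' \<le> norm (A *v e')"
    and eq: "transpose A *v (A *v e') + a *\<^sub>R e' = a *\<^sub>R e"
  shows "(a + c\<^sup>2) * norm e' \<le> a * norm e"
proof (cases "e' = 0")
  case False
  have "c\<^sup>2 * (norm e')\<^sup>2 \<le> (norm (A *v e'))\<^sup>2"
    using coercive c by (metis power_mono power_mult_distrib mult_nonneg_nonneg norm_ge_zero)
  then have "(a + c\<^sup>2) * (norm e')\<^sup>2 \<le> (A *v e') \<bullet> (A *v e') + a * (e' \<bullet> e')"
    by (simp add: power2_norm_eq_inner distrib_right)
  also have "\<dots> = (a *\<^sub>R e) \<bullet> e'"
    using inner_T_reg[of A e' a e'] unfolding eq ..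
  also have "\<dots> = a * (e \<bullet> e')" by simp
  also have "\<dots> \<le> a * (norm e * norm e')"
    using a norm_cauchy_schwarz by (simp add: mult_left_mono)
  finally have "((a + c\<^sup>2) * norm e') * norm e' \<le> (a * norm e) * norm e'"
    by (simp add: power2_eq_square algebra_simps)
  then show ?thesis using False by simp
qed (use a in simp)

text \<open>The errors \<open>u n - y\<close> of the scheme satisfy \<open>T\<^sub>a e' = a e\<close>, because
  \<open>A\<^sup>TA y = A\<^sup>T f\<close> makes \<open>y\<close> a fixed point of every step.\<close>
lemma tikhonov_step_error:
  fixes A :: "real^'m^'m"
  assumes a: "a > 0"
    and u': "u' = a *\<^sub>R (matrix_inv (T_reg A a) *v u)
                 + matrix_inv (T_reg A a) *v (transpose A *v (A *v y))"
  shows "transpose A *v (A *v (u' - y)) + a *\<^sub>R (u' - y) = a *\<^sub>R (u - y)"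
proof -
  have "T_reg A a *v u' = a *\<^sub>R u + transpose A *v (A *v y)"
    using u' T_reg_matrix_inv[OF a, of A]
    by (simp add: matrix_vector_right_distrib matrix_vector_mult_scaleR
             del: transpose_matrix_vector)
  then show ?thesis
    by (simp add: T_reg_mult algebra_simps del: transpose_matrix_vector)
qed

text \<open>The abstract error estimate: a sequence of errors starting in \<open>N(A)\<^sup>\<bottom>\<close> and
  obeying \<open>T\<^bsub>q^n\<^esub> e(n+1) = q\<^sup>n e n\<close> satisfies \<open>|e (n+1)| \<le> q\<^sup>n |e 1| / c\<^sup>2\<close>,
  and therefore tends to zero.\<close>
lemma tikhonov_errors_tendsto_zero:
  fixes A :: "real^'n^'m" and e :: "nat \<Rightarrow> real^'n"
  assumes q: "0 < q" "q < 1"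
    and e1: "e 1 \<in> ker_perp A"
    and rec: "\<And>n. n \<ge> 1 \<Longrightarrow>
      transpose A *v (A *v e (n + 1)) + q ^ n *\<^sub>R e (n + 1) = q ^ n *\<^sub>R e n"
  shows "(\<lambda>n. norm (e n)) \<longlonglongrightarrow> 0"
proof -
  obtain c where c: "c > 0" and coercive: "\<And>x. x \<in> ker_perp A \<Longrightarrow> c * norm x \<le> norm (A *v x)"
    using ker_perp_coercive[of A] by auto
  have qn: "q ^ n > 0" for n using q by simp
  have perp: "e n \<in> ker_perp A" if "n \<ge> 1" for n
    using that
  proof (induction n rule: dec_induct)
    case (step n)
    show ?case
      using tikhonov_step_ker_perp[OF qn[of n] rec[OF step.hyps(1)] step.IH] by simp
  qed (rule e1)
  have contr: "q ^ n * norm (e (n + 1)) + c\<^sup>2 * norm (e (n + 1)) \<le> q ^ n * norm (e n)"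
    if "n \<ge> 1" for n
    using tikhonov_step_contraction[OF qn[of n] _ coercive[OF perp] rec[OF that]] c that
    by (simp add: distrib_right)
  have bounded: "norm (e n) \<le> norm (e 1)" if "n \<ge> 1" for n
    using that
  proof (induction n rule: dec_induct)
    case (step n)
    have "q ^ n * norm (e (n + 1)) \<le> q ^ n * norm (e n)"
      using contr[OF step.hyps(1)] by (smt (verit) norm_ge_zero zero_le_mult_iff zero_le_power2)
    then show ?case using step.IH qn[of n] by simp
  qed simp
  have decay: "norm (e (Suc n)) \<le> q ^ n * (norm (e 1) / c\<^sup>2)" if "n \<ge> 1" for n
  proof -
    have "c\<^sup>2 * norm (e (n + 1)) \<le> q ^ n * norm (e n)"
      using contr[OF that] qn[of n] by (smt (verit) norm_ge_zero zero_le_mult_iff)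
    also have "\<dots> \<le> q ^ n * norm (e 1)"
      using bounded[OF that] qn[of n] by simp
    finally show ?thesis using c by (simp add: field_simps)
  qed
  have "(\<lambda>n. q ^ n * (norm (e 1) / c\<^sup>2)) \<longlonglongrightarrow> 0"
    using q by (intro tendsto_mult_left_zero LIMSEQ_power_zero) simp
  then have "(\<lambda>n. norm (e (Suc n))) \<longlonglongrightarrow> 0"
    by (rule Lim_null_comparison[rotated])
       (use decay in \<open>auto simp: eventually_sequentially\<close>)
  then show ?thesis by (rule LIMSEQ_imp_Suc)
qed

theorem theorem3p1:
  fixes A :: "real^'m^'m" and f y :: "real^'m" and q :: real and u :: "nat \<Rightarrow> real^'m"
  assumes f_range: "f \<in> range (\<lambda>x. A *v x)"
    and y_min: "is_min_norm_solution A f y"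
    and q: "0 < q" "q < 1"
    and u1: "u 1 = 0"
    and urec: "\<And>n. n \<ge> 1 \<Longrightarrow>
       u (n + 1) = q ^ n *\<^sub>R (matrix_inv (T_reg A (q ^ n)) *v u n)
                   + matrix_inv (T_reg A (q ^ n)) *v (transpose A *v f)"
  shows "(\<lambda>n. norm (u n - y)) \<longlonglongrightarrow> 0"
proof (rule tikhonov_errors_tendsto_zero[OF q])
  have "- y \<in> ker_perp A"
    using min_norm_solution_ker_perp[OF y_min] subspace_ker_perp subspace_neg by blast
  then show "u 1 - y \<in> ker_perp A" using u1 by simp
next
  fix n :: nat assume "n \<ge> 1"
  moreover have "f = A *v y" using y_min unfolding is_min_norm_solution_def by simp
  ultimately show "transpose A *v (A *v (u (n + 1) - y)) + q ^ n *\<^sub>R (u (n + 1) - y)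
                   = q ^ n *\<^sub>R (u n - y)"
    using q urec by (intro tikhonov_step_error) simp_all
qed

end
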